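(* Let $f,\lambda,\alpha,\beta>0$ be reals and let $G$ be a finite graph with at least one vertex, of maximum degree $\Delta\ge1$, in which the subgraph induced by the neighbourhood of every vertex has at most $\Delta^2/f$ edges. Let $\mathbf{I}$ be an independent set drawn from the hard-core model at fugacity $\lambda$ on $G$. Then for every $v\in V(G)$, \[ \alpha \Pr(v\in\mathbf{I}) + \beta\,\mathbb{E}|N(v)\cap \mathbf{I}| \ge \frac{\lambda}{1+\lambda}\min_{z\ge0}\left(\alpha(1+\lambda)^{-z} + \beta z(1+\lambda)^{-\frac{2\Delta^2}{fz}}\right)\,. \] Moreover, \[ \frac{1}{|V(G)|}\mathbb{E}|\mathbf{I}| \ge \min_{z>0}\max\left\{\frac{\lambda}{1+\lambda}(1+\lambda)^{-z},\ \frac{\lambda}{1+\lambda}\frac{z}{\Delta}(1+\lambda)^{-\frac{2\Delta^2}{fz}}\right\}\,. \]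
   Context: For a graph $G$ with set $\mathcal{I}(G)$ of independent sets (including the empty set) and $\lambda>0$, the hard-core model on $G$ at fugacity $\lambda$ is the probability distribution on $\mathcal{I}(G)$ with $\Pr(\mathbf{I}=I)=\lambda^{|I|}/Z_G(\lambda)$, where $Z_G(\lambda)=\sum_{I\in\mathcal{I}(G)}\lambda^{|I|}$. In the first inequality, the term $z(1+\lambda)^{-2\Delta^2/(fz)}$ at $z=0$ is interpreted as its limit $0$. *)

theory Defs
  imports Complex_Main
begin

definition fin_graph :: "'a set \<Rightarrow> ('a \<Rightarrow> 'a \<Rightarrow> bool) \<Rightarrow> bool" where
  "fin_graph V E \<longleftrightarrow> finite V \<and> (\<forall>x y. E x y \<longrightarrow> x \<in> V \<and> y \<in> V)
     \<and> (\<forall>x y. E x y \<longrightarrow> E y x) \<and> (\<forall>x. \<not> E x x)"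

definition nbhd :: "'a set \<Rightarrow> ('a \<Rightarrow> 'a \<Rightarrow> bool) \<Rightarrow> 'a \<Rightarrow> 'a set" where
  "nbhd V E v = {u \<in> V. E v u}"

definition max_degree :: "'a set \<Rightarrow> ('a \<Rightarrow> 'a \<Rightarrow> bool) \<Rightarrow> nat" where
  "max_degree V E = Max ((\<lambda>v. card (nbhd V E v)) ` V)"

definition induced_edges :: "('a \<Rightarrow> 'a \<Rightarrow> bool) \<Rightarrow> 'a set \<Rightarrow> nat" where
  "induced_edges E S = card {{x, y} | x y. x \<in> S \<and> y \<in> S \<and> E x y}"

definition indep_sets :: "'a set \<Rightarrow> ('a \<Rightarrow> 'a \<Rightarrow> bool) \<Rightarrow> 'a set set" where
  "indep_sets V E = {I. I \<subseteq> V \<and> (\<forall>x\<in>I. \<forall>y\<in>I. \<not> E x y)}"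

definition hc_Z :: "'a set \<Rightarrow> ('a \<Rightarrow> 'a \<Rightarrow> bool) \<Rightarrow> real \<Rightarrow> real" where
  "hc_Z V E lam = (\<Sum>I\<in>indep_sets V E. lam ^ card I)"

definition hc_expect :: "'a set \<Rightarrow> ('a \<Rightarrow> 'a \<Rightarrow> bool) \<Rightarrow> real \<Rightarrow> ('a set \<Rightarrow> real) \<Rightarrow> real" where
  "hc_expect V E lam X = (\<Sum>I\<in>indep_sets V E. lam ^ card I * X I) / hc_Z V E lam"

definition hc_prob :: "'a set \<Rightarrow> ('a \<Rightarrow> 'a \<Rightarrow> bool) \<Rightarrow> real \<Rightarrow> ('a set \<Rightarrow> bool) \<Rightarrow> real" where
  "hc_prob V E lam P = hc_expect V E lam (\<lambda>I. if P I then 1 else 0)"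

end

theory Submission
  imports Defs "HOL-Analysis.Convex"
begin

(*
  Fix a vertex v and condition on J = I - N[v]. Given J, the set I \<inter> N[v] is either {v}
  (weight lam) or an independent set of the uncovered neighbours U_J of v, i.e. those with no
  neighbour in J (total weight Z(U_J)). Since Z(U_J) \<le> (1 + lam)^|U_J|, this gives
  Pr(v \<in> I) \<ge> lam/(1 + lam) E[(1 + lam)^(-Y)], Y the number of uncovered neighbours.
  In the hard-core model on U_J a vertex u is occupied with probability at least
  lam/(1 + lam) (1 + lam)^(-deg u); Jensen over u and the handshake lemma then give
  E|N(v) \<inter> I| \<ge> lam/(1 + lam) E[Y (1 + lam)^(-2D/Y)] when N(v) spans at most D edges.
  The first claim follows by bounding the combination of both right-hand sides from below
  by its infimum. For the second, average over v: the sum over v of Pr(v \<in> I) is E|I|, that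
  of E|N(v) \<inter> I| is at most Delta E|I|, and Jensen applied to the convex functions
  (1 + lam)^(-z) and z (1 + lam)^(-C/z) moves both expectations to the mean of Y.
*)

section \<open>Convexity\<close>

lemma convex_on_powr_linear:
  fixes q c :: real
  assumes "0 < q"
  shows "convex_on UNIV (\<lambda>z. q powr (c * z))"
proof (rule f''_ge0_imp_convex)
  fix z :: real
  let ?k = "c * ln q"
  show "((\<lambda>z. q powr (c * z)) has_real_derivative q powr (c * z) * ?k) (at z)"
    using assms by (auto intro!: derivative_eq_intros)
  show "((\<lambda>z. q powr (c * z) * ?k) has_real_derivative q powr (c * z) * ?k * ?k) (at z)"
    using assms by (auto intro!: derivative_eq_intros)
  show "0 \<le> q powr (c * z) * ?k * ?k"
    by (metis mult.assoc mult_nonneg_nonneg powr_ge_zero zero_le_square)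
qed simp

text \<open>Antitonicity of \<open>h\<close> is what keeps the perspective convex up to the endpoint \<open>0\<close>.\<close>

lemma convex_on_perspective:
  fixes h :: "real \<Rightarrow> real"
  assumes convex: "convex_on {0<..} h"
    and antimono: "\<And>s t. 0 < s \<Longrightarrow> s \<le> t \<Longrightarrow> h t \<le> h s"
  shows "convex_on {0..} (\<lambda>z. z * h (1 / z))"
proof (rule convex_onI)
  fix t x y :: real
  assume t: "0 < t" "t < 1" and x: "x \<in> {0..}" and y: "y \<in> {0..}"
  have shrink: "u * h (1 / u) \<le> u * h (1 / w)" if "0 < u" "u \<le> w" for u w
    using that by (intro mult_left_mono antimono) (auto simp: frac_le)
  consider "x = 0" "y = 0" | "x = 0" "0 < y" | "0 < x" "y = 0" | "0 < x" "0 < y"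
    using x y by force
  then show "((1 - t) *\<^sub>R x + t *\<^sub>R y) * h (1 / ((1 - t) *\<^sub>R x + t *\<^sub>R y))
      \<le> (1 - t) * (x * h (1 / x)) + t * (y * h (1 / y))"
  proof cases
    case 1
    then show ?thesis by simp
  next
    case 2
    then show ?thesis using shrink[of "t * y" y] t by (simp add: mult.assoc)
  next
    case 3
    then show ?thesis using shrink[of "(1 - t) * x" x] t by (simp add: mult.assoc)
  next
    case 4
    define z where "z = (1 - t) * x + t * y"
    \<comment> \<open>\<open>1 / z\<close> is the mean of \<open>1 / x\<close> and \<open>1 / y\<close> with weights \<open>(1 - t) * x / z\<close> and \<open>t * y / z\<close>\<close>
    define a where "a = (1 - t) * x / z"
    have z: "0 < z" using 4 t by (simp add: z_def add_pos_pos)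
    have a: "0 \<le> a" "a \<le> 1" "(1 - a) * z = t * y"
      using 4 t z by (auto simp: a_def z_def field_simps)
    have "a * (1 / x) = (1 - t) / z" "(1 - a) * (1 / y) = t / z"
      using 4 z a(3) by (simp_all add: a_def field_simps)
    then have "(1 - (1 - a)) *\<^sub>R (1 / x) + (1 - a) *\<^sub>R (1 / y) = (1 - t) / z + t / z"
      by simp
    also have "\<dots> = 1 / z"
      by (simp add: add_divide_distrib[symmetric])
    finally have "1 / z = (1 - (1 - a)) *\<^sub>R (1 / x) + (1 - a) *\<^sub>R (1 / y)" ..
    then have "h (1 / z) \<le> a * h (1 / x) + (1 - a) * h (1 / y)"
      using convex_onD[OF convex, of "1 - a" "1 / x" "1 / y"] 4 a by simp
    then have "z * h (1 / z) \<le> z * (a * h (1 / x) + (1 - a) * h (1 / y))"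
      using z by (intro mult_left_mono) auto
    also have "\<dots> = (a * z) * h (1 / x) + ((1 - a) * z) * h (1 / y)"
      by (simp add: algebra_simps)
    also have "\<dots> = (1 - t) * (x * h (1 / x)) + t * (y * h (1 / y))"
      using z a(3) by (simp add: a_def)
    finally show ?thesis by (simp add: z_def)
  qed
qed simp

lemma convex_on_mult_powr_neg_div:
  fixes q C :: real
  assumes "1 \<le> q" "0 \<le> C"
  shows "convex_on {0..} (\<lambda>z. z * q powr (- (C / z)))"
proof -
  have "convex_on {0<..} (\<lambda>s. q powr (- C * s))"
    using convex_on_powr_linear[of q "- C"] assms by (auto intro: convex_on_subset)
  moreover have "q powr (- C * t) \<le> q powr (- C * s)" if "s \<le> t" for s t
    using that assms by (intro powr_mono) (auto simp: mult_left_mono)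
  ultimately show ?thesis
    using convex_on_perspective[of "\<lambda>s. q powr (- C * s)"] by simp
qed

section \<open>The hard-core model\<close>

lemma fin_graphD:
  assumes "fin_graph V E"
  shows "finite V" "symp E" "irreflp E"
  using assms by (auto simp: fin_graph_def symp_def irreflp_def)

lemma finite_indep_sets: "finite U \<Longrightarrow> finite (indep_sets U E)"
  by (rule finite_subset[of _ "Pow U"]) (auto simp: indep_sets_def)

lemma empty_in_indep_sets [simp]: "{} \<in> indep_sets U E"
  by (simp add: indep_sets_def)

lemma indep_sets_empty [simp]: "indep_sets {} E = {{}}"
  by (auto simp: indep_sets_def)

lemma hc_Z_ge_1:
  fixes U :: "'a set"
  assumes "finite U" "0 \<le> lam"
  shows "1 \<le> hc_Z U E lam"
proof -
  have "lam ^ card ({} :: 'a set) \<le> hc_Z U E lam"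
    unfolding hc_Z_def using assms
    by (intro member_le_sum[where f = "\<lambda>I. lam ^ card I"]) (auto intro: finite_indep_sets)
  then show ?thesis by simp
qed

lemma sum_Pow_power_card:
  fixes lam :: real
  shows "finite N \<Longrightarrow> (\<Sum>T\<in>Pow N. lam ^ card T) = (1 + lam) ^ card N"
  using prod_add[of N "\<lambda>_. lam" "\<lambda>_. 1"] by (simp add: add.commute)

lemma hc_Z_le_split:
  assumes U: "finite U" and N: "N \<subseteq> U" and lam: "0 \<le> lam"
  shows "hc_Z U E lam \<le> hc_Z (U - N) E lam * (1 + lam) ^ card N"
proof -
  define split where "split K = (K - N, K \<inter> N)" for K
  have "finite N" using U N finite_subset by blast
  have inj: "inj_on split (indep_sets U E)"
    by (rule inj_onI) (auto simp: split_def)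
  have img: "split ` indep_sets U E \<subseteq> indep_sets (U - N) E \<times> Pow N"
    by (auto simp: split_def indep_sets_def)
  have card_split: "lam ^ card K = lam ^ card (K - N) * lam ^ card (K \<inter> N)"
    if "K \<in> indep_sets U E" for K
  proof -
    have "finite K" using that U finite_subset by (auto simp: indep_sets_def)
    then show ?thesis by (simp add: card_Int_Diff[of K N] power_add mult.commute)
  qed
  have "hc_Z U E lam = (\<Sum>K\<in>indep_sets U E. lam ^ card (K - N) * lam ^ card (K \<inter> N))"
    by (simp add: hc_Z_def card_split cong: sum.cong)
  also have "\<dots> = (\<Sum>p\<in>split ` indep_sets U E. lam ^ card (fst p) * lam ^ card (snd p))"
    by (subst sum.reindex[OF inj]) (simp add: split_def)
  also have "\<dots> \<le> (\<Sum>p\<in>indep_sets (U - N) E \<times> Pow N. lam ^ card (fst p) * lam ^ card (snd p))"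
    using img lam U \<open>finite N\<close> by (intro sum_mono2 finite_cartesian_product finite_indep_sets) auto
  also have "\<dots> = (\<Sum>K\<in>indep_sets (U - N) E. \<Sum>T\<in>Pow N. lam ^ card K * lam ^ card T)"
    by (simp add: sum.cartesian_product case_prod_unfold)
  also have "\<dots> = hc_Z (U - N) E lam * (\<Sum>T\<in>Pow N. lam ^ card T)"
    by (simp add: hc_Z_def sum_product)
  also have "\<dots> = hc_Z (U - N) E lam * (1 + lam) ^ card N"
    using sum_Pow_power_card[OF \<open>finite N\<close>] by simp
  finally show ?thesis .
qed

lemma hc_Z_le_power:
  assumes "finite U" "0 \<le> lam"
  shows "hc_Z U E lam \<le> (1 + lam) ^ card U"
  using hc_Z_le_split[of U U lam E] assms by (simp add: hc_Z_def)

lemma hc_Z_mult_powr_neg_card_le_1: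
  assumes "finite U" "0 \<le> lam"
  shows "hc_Z U E lam * (1 + lam) powr - real (card U) \<le> 1"
proof -
  have "(1 + lam) powr - real (card U) = 1 / (1 + lam) ^ card U"
    using assms(2) by (simp add: powr_minus powr_realpow divide_inverse)
  then show ?thesis
    using hc_Z_le_power[OF assms, of E] assms(2) by (simp add: divide_le_eq_1)
qed

lemma hc_expect_altdef:
  "hc_expect V E lam X = (\<Sum>I\<in>indep_sets V E. lam ^ card I / hc_Z V E lam * X I)"
  by (simp add: hc_expect_def sum_divide_distrib)

lemma hc_expect_const:
  assumes "finite V" "0 \<le> lam"
  shows "hc_expect V E lam (\<lambda>_. c) = c"
proof -
  have "(\<Sum>I\<in>indep_sets V E. lam ^ card I * c) = hc_Z V E lam * c"
    by (simp add: hc_Z_def sum_distrib_right)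
  then show ?thesis
    using hc_Z_ge_1[OF assms, of E] by (simp add: hc_expect_def)
qed

lemma hc_expect_cong:
  "(\<And>I. I \<in> indep_sets V E \<Longrightarrow> X I = Y I) \<Longrightarrow> hc_expect V E lam X = hc_expect V E lam Y"
  by (simp add: hc_expect_def)

lemma hc_expect_add:
  "hc_expect V E lam (\<lambda>I. X I + Y I) = hc_expect V E lam X + hc_expect V E lam Y"
  by (simp add: hc_expect_def sum.distrib distrib_left add_divide_distrib)

lemma hc_expect_cmult:
  "hc_expect V E lam (\<lambda>I. c * X I) = c * hc_expect V E lam X"
  by (simp add: hc_expect_def sum_distrib_left mult.left_commute)

lemma hc_expect_sum:
  "hc_expect V E lam (\<lambda>I. \<Sum>a\<in>A. X a I) = (\<Sum>a\<in>A. hc_expect V E lam (X a))"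
  unfolding hc_expect_def sum_divide_distrib[symmetric] sum_distrib_left
  by (subst sum.swap) simp

lemma hc_expect_mono:
  assumes "0 \<le> lam" "\<And>I. I \<in> indep_sets V E \<Longrightarrow> X I \<le> Y I"
  shows "hc_expect V E lam X \<le> hc_expect V E lam Y"
proof -
  have "0 \<le> hc_Z V E lam"
    unfolding hc_Z_def using assms(1) by (intro sum_nonneg) simp
  then show ?thesis
    unfolding hc_expect_def using assms by (intro divide_right_mono sum_mono mult_left_mono) auto
qed

lemma hc_expect_nonneg:
  assumes "0 \<le> lam" "\<And>I. I \<in> indep_sets V E \<Longrightarrow> 0 \<le> X I"
  shows "0 \<le> hc_expect V E lam X"
  unfolding hc_expect_def hc_Z_def using assms
  by (intro divide_nonneg_nonneg sum_nonneg mult_nonneg_nonneg) auto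

lemma hc_expect_jensen:
  fixes V :: "'a set" and \<phi> :: "real \<Rightarrow> real"
  assumes "finite V" "0 \<le> lam" "convex_on C \<phi>" "\<And>I. I \<in> indep_sets V E \<Longrightarrow> X I \<in> C"
  shows "\<phi> (hc_expect V E lam X) \<le> hc_expect V E lam (\<lambda>I. \<phi> (X I))"
proof -
  define w where "w = (\<lambda>I :: 'a set. lam ^ card I / hc_Z V E lam)"
  have "(\<Sum>I\<in>indep_sets V E. w I) = 1"
    using hc_Z_ge_1[OF assms(1,2), of E] by (simp add: w_def hc_Z_def sum_divide_distrib[symmetric])
  then have "\<phi> (\<Sum>I\<in>indep_sets V E. w I *\<^sub>R X I) \<le> (\<Sum>I\<in>indep_sets V E. w I * \<phi> (X I))"
    using assms hc_Z_ge_1[OF assms(1,2), of E]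
    by (intro convex_on_sum finite_indep_sets) (auto simp: w_def)
  then show ?thesis
    by (simp add: hc_expect_altdef w_def)
qed

lemma hc_expect_scaled_le:
  assumes "finite V" "0 \<le> lam"
    and "c * (\<Sum>I\<in>indep_sets V E. lam ^ card I * Y I) \<le> (\<Sum>I\<in>indep_sets V E. lam ^ card I * X I)"
  shows "c * hc_expect V E lam Y \<le> hc_expect V E lam X"
  using assms(3) hc_Z_ge_1[OF assms(1,2), of E]
  by (auto simp: hc_expect_def intro!: divide_right_mono)

section \<open>Occupancy in a graph with few edges\<close>

text \<open>The independent sets containing \<open>u\<close> are \<open>u\<close> added to an independent set avoiding the
  closed neighbourhood of \<open>u\<close>, and deleting that neighbourhood costs at most a factor
  \<open>(1 + lam) ^ (deg u + 1)\<close> in the partition function.\<close>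

lemma sum_indep_sets_containing_ge:
  assumes E: "symp E" "irreflp E" and U: "finite U" and u: "u \<in> U" and lam: "0 < lam"
  shows "lam / (1 + lam) * hc_Z U E lam * (1 + lam) powr - real (card {w\<in>U. E u w})
    \<le> (\<Sum>K\<in>{K\<in>indep_sets U E. u \<in> K}. lam ^ card K)"
proof -
  define N where "N = insert u {w\<in>U. E u w}"
  have "u \<notin> {w\<in>U. E u w}" using E(2) by (simp add: irreflp_def)
  then have card_N: "card N = Suc (card {w\<in>U. E u w})"
    using U by (simp add: N_def)
  have containing: "{K\<in>indep_sets U E. u \<in> K} = insert u ` indep_sets (U - N) E"
  proof (intro set_eqI iffI)
    fix K assume K: "K \<in> {K\<in>indep_sets U E. u \<in> K}"
    then have "K - {u} \<in> indep_sets (U - N) E" "K = insert u (K - {u})"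
      by (auto simp: N_def indep_sets_def)
    then show "K \<in> insert u ` indep_sets (U - N) E" by blast
  next
    fix K assume "K \<in> insert u ` indep_sets (U - N) E"
    then obtain K' where K': "K' \<in> indep_sets (U - N) E" "K = insert u K'" by blast
    have "\<not> E u w \<and> \<not> E w u" if "w \<in> K'" for w
      using K' that by (auto simp: N_def indep_sets_def dest: sympD[OF E(1)])
    then show "K \<in> {K\<in>indep_sets U E. u \<in> K}"
      using K' u E(2) by (auto simp: indep_sets_def irreflp_def)
  qed
  have inj: "inj_on (insert u) (indep_sets (U - N) E)"
    by (rule inj_onI) (auto simp: N_def indep_sets_def)
  have card_insert: "card (insert u K) = Suc (card K)" if "K \<in> indep_sets (U - N) E" for K
  proof -
    have "K \<subseteq> U" "u \<notin> K" using that by (auto simp: N_def indep_sets_def)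
    then show ?thesis using finite_subset[OF _ U] by simp
  qed
  have "(1 + lam) powr - real (card {w\<in>U. E u w}) = (1 + lam) / (1 + lam) ^ card N"
    using lam by (simp add: card_N powr_minus powr_realpow divide_inverse)
  then have "lam / (1 + lam) * hc_Z U E lam * (1 + lam) powr - real (card {w\<in>U. E u w})
      = lam * hc_Z U E lam / (1 + lam) ^ card N"
    using lam by simp
  also have "\<dots> \<le> lam * (hc_Z (U - N) E lam * (1 + lam) ^ card N) / (1 + lam) ^ card N"
    using hc_Z_le_split[OF U _ less_imp_le[OF lam]] u lam
    by (intro divide_right_mono mult_left_mono) (auto simp: N_def)
  also have "\<dots> = lam * hc_Z (U - N) E lam"
    using lam by simp
  also have "\<dots> = (\<Sum>K\<in>{K\<in>indep_sets U E. u \<in> K}. lam ^ card K)"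
    unfolding containing by (simp add: sum.reindex[OF inj] card_insert hc_Z_def sum_distrib_left)
  finally show ?thesis .
qed

lemma sum_card_indep_sets_eq:
  assumes "finite U"
  shows "(\<Sum>K\<in>indep_sets U E. lam ^ card K * real (card K))
    = (\<Sum>u\<in>U. \<Sum>K\<in>{K\<in>indep_sets U E. u \<in> K}. lam ^ card K)"
proof -
  have "real (card K) = (\<Sum>u\<in>U. if u \<in> K then 1 else 0)" if "K \<in> indep_sets U E" for K
    using that assms by (simp add: sum.If_cases Int_absorb1 indep_sets_def)
  then have "(\<Sum>K\<in>indep_sets U E. lam ^ card K * real (card K))
      = (\<Sum>K\<in>indep_sets U E. \<Sum>u\<in>U. if u \<in> K then lam ^ card K else 0)"
    by (simp add: sum_distrib_left if_distrib cong: sum.cong if_cong)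
  also have "\<dots> = (\<Sum>u\<in>U. \<Sum>K\<in>{K\<in>indep_sets U E. u \<in> K}. lam ^ card K)"
    using finite_indep_sets[OF assms] by (subst sum.swap) (simp add: sum.inter_filter)
  finally show ?thesis .
qed

lemma sum_degree_le_induced_edges:
  assumes U: "finite U"
  shows "(\<Sum>u\<in>U. card {w\<in>U. E u w}) \<le> 2 * induced_edges E U"
proof -
  define arcs where "arcs = (SIGMA u:U. {w\<in>U. E u w})"
  define edges where "edges = {{x, y} | x y. x \<in> U \<and> y \<in> U \<and> E x y}"
  define fibre where "fibre e = {p\<in>arcs. {fst p, snd p} = e}" for e
  have "finite arcs" using U by (simp add: arcs_def)
  have "finite edges"
    unfolding edges_def by (rule finite_subset[of _ "Pow U"]) (use U in auto)
  have arcs_fibres: "arcs \<subseteq> (\<Union>e\<in>edges. fibre e)"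
  proof
    fix p assume p: "p \<in> arcs"
    then obtain a b where "p = (a, b)" "a \<in> U" "b \<in> U" "E a b" by (auto simp: arcs_def)
    then have "{a, b} \<in> edges" "p \<in> fibre {a, b}" using p by (auto simp: edges_def fibre_def)
    then show "p \<in> (\<Union>e\<in>edges. fibre e)" by blast
  qed
  have fibre_le_2: "card (fibre e) \<le> 2" if edge: "e \<in> edges" for e
  proof -
    obtain x y where e: "e = {x, y}" using edge by (auto simp: edges_def)
    have "fibre e \<subseteq> {(x, y), (y, x)}"
      by (auto simp: fibre_def e doubleton_eq_iff)
    then have "card (fibre e) \<le> card {(x, y), (y, x)}"
      by (intro card_mono) auto
    also have "\<dots> \<le> 2" by (simp add: card_insert_le_m1)
    finally show ?thesis .
  qed
  have "finite (\<Union>e\<in>edges. fibre e)"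
    using \<open>finite edges\<close> \<open>finite arcs\<close> by (simp add: fibre_def)
  have "(\<Sum>u\<in>U. card {w\<in>U. E u w}) = card arcs"
    using U by (simp add: arcs_def)
  also have "\<dots> \<le> card (\<Union>e\<in>edges. fibre e)"
    using arcs_fibres \<open>finite (\<Union>e\<in>edges. fibre e)\<close> by (rule card_mono[rotated])
  also have "\<dots> \<le> (\<Sum>e\<in>edges. card (fibre e))"
    by (rule card_UN_le[OF \<open>finite edges\<close>])
  also have "\<dots> \<le> (\<Sum>e\<in>edges. 2)"
    by (rule sum_mono) (rule fibre_le_2)
  also have "\<dots> = 2 * induced_edges E U"
    by (simp add: edges_def induced_edges_def)
  finally show ?thesis .
qed

lemma induced_edges_mono:
  assumes "finite T" "S \<subseteq> T"
  shows "induced_edges E S \<le> induced_edges E T"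
  unfolding induced_edges_def
proof (rule card_mono)
  show "finite {{x, y} |x y. x \<in> T \<and> y \<in> T \<and> E x y}"
    by (rule finite_subset[of _ "Pow T"]) (use assms in auto)
qed (use assms in blast)

lemma sum_powr_neg_degree_ge:
  fixes q D :: real
  assumes U: "finite U" and q: "1 \<le> q" and D: "real (induced_edges E U) \<le> D"
  shows "real (card U) * q powr - (2 * D / real (card U)) \<le> (\<Sum>u\<in>U. q powr - real (card {w\<in>U. E u w}))"
proof (cases "U = {}")
  case True
  then show ?thesis by simp
next
  case False
  define n where "n = real (card U)"
  define deg where "deg u = real (card {w\<in>U. E u w})" for u
  define A where "A z = q powr - z" for z
  have n: "0 < n" using False U by (simp add: n_def card_gt_0_iff)
  have "(\<Sum>u\<in>U. deg u) \<le> 2 * real (induced_edges E U)"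
    using sum_degree_le_induced_edges[OF U, of E] unfolding deg_def of_nat_sum[symmetric]
    by (simp only: of_nat_le_iff of_nat_mult of_nat_numeral)
  then have "(\<Sum>u\<in>U. deg u) / n \<le> 2 * D / n"
    using D n by (intro divide_right_mono) auto
  then have "A (2 * D / n) \<le> A ((\<Sum>u\<in>U. deg u) / n)"
    using q unfolding A_def by (intro powr_mono) auto
  also have "\<dots> = A (\<Sum>u\<in>U. (1 / n) *\<^sub>R deg u)"
    by (simp add: sum_divide_distrib)
  also have "\<dots> \<le> (\<Sum>u\<in>U. (1 / n) * A (deg u))"
    using convex_on_powr_linear[of q "- 1"] q U False n
    by (intro convex_on_sum[where C = UNIV]) (auto simp: A_def n_def)
  also have "\<dots> = (\<Sum>u\<in>U. A (deg u)) / n"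
    by (simp add: sum_divide_distrib)
  finally show ?thesis
    using n by (simp add: pos_le_divide_eq mult.commute n_def A_def deg_def)
qed

lemma sum_card_indep_sets_ge:
  assumes E: "symp E" "irreflp E" and U: "finite U" and lam: "0 < lam"
    and D: "real (induced_edges E U) \<le> D"
  shows "lam / (1 + lam) * hc_Z U E lam * (real (card U) * (1 + lam) powr - (2 * D / real (card U)))
    \<le> (\<Sum>K\<in>indep_sets U E. lam ^ card K * real (card K))"
proof -
  let ?c = "lam / (1 + lam) * hc_Z U E lam"
  have "?c * (real (card U) * (1 + lam) powr - (2 * D / real (card U)))
      \<le> ?c * (\<Sum>u\<in>U. (1 + lam) powr - real (card {w\<in>U. E u w}))"
    using sum_powr_neg_degree_ge[OF U _ D] lam hc_Z_ge_1[OF U, of lam E] by (intro mult_left_mono) auto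
  also have "\<dots> = (\<Sum>u\<in>U. ?c * (1 + lam) powr - real (card {w\<in>U. E u w}))"
    by (simp add: sum_distrib_left)
  also have "\<dots> \<le> (\<Sum>u\<in>U. \<Sum>K\<in>{K\<in>indep_sets U E. u \<in> K}. lam ^ card K)"
    using sum_indep_sets_containing_ge[OF E U _ lam] by (intro sum_mono) simp
  also have "\<dots> = (\<Sum>K\<in>indep_sets U E. lam ^ card K * real (card K))"
    using sum_card_indep_sets_eq[OF U] by simp
  finally show ?thesis .
qed

section \<open>Splitting at a vertex\<close>

text \<open>If \<open>v \<in> I\<close> no neighbour of \<open>v\<close> is uncovered, because \<open>v\<close> itself lies in \<open>I - N(v)\<close>.\<close>

definition uncovered :: "'a set \<Rightarrow> ('a \<Rightarrow> 'a \<Rightarrow> bool) \<Rightarrow> 'a \<Rightarrow> 'a set \<Rightarrow> 'a set" where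
  "uncovered V E v I = {u \<in> nbhd V E v. \<forall>w \<in> I - nbhd V E v. \<not> E u w}"

lemma uncovered_subset_nbhd: "uncovered V E v I \<subseteq> nbhd V E v"
  by (auto simp: uncovered_def)

lemma finite_uncovered: "finite V \<Longrightarrow> finite (uncovered V E v I)"
  by (simp add: uncovered_def nbhd_def)

lemma indep_sets_split_at_bij:
  assumes G: "fin_graph V E" and v: "v \<in> V"
  defines "R \<equiv> V - insert v (nbhd V E v)"
  shows "bij_betw (\<lambda>(J, K). J \<union> K)
    (SIGMA J:indep_sets R E. insert {v} (indep_sets (uncovered V E v J) E)) (indep_sets V E)"
proof -
  let ?S = "SIGMA J:indep_sets R E. insert {v} (indep_sets (uncovered V E v J) E)"
  let ?join = "\<lambda>(J, K). J \<union> K" and ?split = "\<lambda>I. (I \<inter> R, I - R)"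
  have E: "symp E" "irreflp E" using fin_graphD[OF G] by auto
  have JR: "J \<subseteq> R" if "J \<in> indep_sets R E" for J
    using that by (simp add: indep_sets_def)
  have KN: "K \<subseteq> insert v (nbhd V E v)" if "K \<in> insert {v} (indep_sets (uncovered V E v J) E)" for J K
    using that uncovered_subset_nbhd by (fastforce simp: indep_sets_def)
  have "R \<inter> insert v (nbhd V E v) = {}"
    by (auto simp: R_def)
  then have "\<forall>p\<in>?S. ?split (?join p) = p"
    using JR KN by fast
  moreover have "\<forall>I\<in>indep_sets V E. ?join (?split I) = I"
    by auto
  moreover have "?join ` ?S \<subseteq> indep_sets V E"
  proof clarify
    fix J K assume J: "J \<in> indep_sets R E" and K: "K \<in> insert {v} (indep_sets (uncovered V E v J) E)"
    have "\<not> E u w" if "u \<in> K" "w \<in> J" for u w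
    proof -
      have "w \<in> V" "w \<in> J - nbhd V E v" using JR[OF J] that(2) by (auto simp: R_def)
      then show ?thesis
        using K that(1) by (auto simp: indep_sets_def uncovered_def nbhd_def)
    qed
    then have "\<forall>u\<in>K. \<forall>w\<in>J. \<not> E u w \<and> \<not> E w u"
      using E(1) by (auto dest: sympD)
    then show "J \<union> K \<in> indep_sets V E"
      using J K v E(2) by (auto simp: R_def indep_sets_def uncovered_def nbhd_def irreflp_def)
  qed
  moreover have "?split I \<in> ?S" if I: "I \<in> indep_sets V E" for I
  proof (cases "v \<in> I")
    case True
    then have "I - R = {v}"
      using I by (auto simp: R_def indep_sets_def nbhd_def)
    then show ?thesis using I by (auto simp: R_def indep_sets_def)
  next
    case False
    then have "I - R \<in> indep_sets (uncovered V E v (I \<inter> R)) E"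
      using I by (auto simp: R_def indep_sets_def uncovered_def nbhd_def)
    then show ?thesis using I by (auto simp: R_def indep_sets_def)
  qed
  then have "?split ` indep_sets V E \<subseteq> ?S"
    by blast
  ultimately show ?thesis
    by (rule bij_betw_byWitness)
qed

lemma sum_indep_sets_split_at:
  assumes G: "fin_graph V E" and v: "v \<in> V"
  shows "(\<Sum>I\<in>indep_sets V E. F I)
    = (\<Sum>J\<in>indep_sets (V - insert v (nbhd V E v)) E.
         (\<Sum>K\<in>indep_sets (uncovered V E v J) E. F (J \<union> K)) + F (insert v J))"
proof -
  let ?R = "V - insert v (nbhd V E v)"
  have "finite V" "irreflp E" using fin_graphD[OF G] by auto
  then have fin: "finite (indep_sets ?R E)" "finite (indep_sets (uncovered V E v J) E)" for J
    by (auto intro!: finite_indep_sets finite_uncovered)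
  have "{v} \<notin> indep_sets (uncovered V E v J) E" for J
    using \<open>irreflp E\<close> by (auto simp: indep_sets_def uncovered_def nbhd_def irreflp_def)
  then have insert_v: "(\<Sum>K\<in>insert {v} (indep_sets (uncovered V E v J) E). F (J \<union> K))
      = (\<Sum>K\<in>indep_sets (uncovered V E v J) E. F (J \<union> K)) + F (insert v J)" for J
    using fin(2) by (simp add: add.commute)
  have "(\<Sum>I\<in>indep_sets V E. F I)
      = (\<Sum>(J, K)\<in>(SIGMA J:indep_sets ?R E. insert {v} (indep_sets (uncovered V E v J) E)). F (J \<union> K))"
    using sum.reindex_bij_betw[OF indep_sets_split_at_bij[OF G v], of F] by (simp add: case_prod_unfold)
  also have "\<dots> = (\<Sum>J\<in>indep_sets ?R E. \<Sum>K\<in>insert {v} (indep_sets (uncovered V E v J) E). F (J \<union> K))"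
    using fin by (intro sum.Sigma[symmetric]) auto
  finally show ?thesis
    by (simp only: insert_v)
qed

lemma split_at_union_simps:
  assumes G: "fin_graph V E" and J: "J \<in> indep_sets (V - insert v (nbhd V E v)) E"
    and K: "K \<in> indep_sets (uncovered V E v J) E"
  shows "card (J \<union> K) = card J + card K" and "v \<notin> K"
    and "nbhd V E v \<inter> (J \<union> K) = K" and "uncovered V E v (J \<union> K) = uncovered V E v J"
proof -
  have V: "finite V" and "irreflp E" using fin_graphD[OF G] by auto
  then have v_nbhd: "v \<notin> nbhd V E v" by (simp add: nbhd_def irreflp_def)
  have JR: "J \<subseteq> V - insert v (nbhd V E v)" using J by (simp add: indep_sets_def)
  have KN: "K \<subseteq> nbhd V E v" using K by (auto simp: indep_sets_def uncovered_def)
  have "J \<subseteq> V" "K \<subseteq> V" using JR KN by (auto simp: nbhd_def)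
  then have "finite J" "finite K" using V by (auto intro: finite_subset)
  moreover have "J \<inter> K = {}" using JR KN by blast
  ultimately show "card (J \<union> K) = card J + card K"
    by (rule card_Un_disjoint)
  show "v \<notin> K" "nbhd V E v \<inter> (J \<union> K) = K"
    using JR KN v_nbhd by auto
  have "J \<union> K - nbhd V E v = J - nbhd V E v" using KN by blast
  then show "uncovered V E v (J \<union> K) = uncovered V E v J" by (simp add: uncovered_def)
qed

lemma split_at_insert_simps:
  assumes G: "fin_graph V E" and J: "J \<in> indep_sets (V - insert v (nbhd V E v)) E"
  shows "v \<notin> J" and "card (insert v J) = Suc (card J)" and "nbhd V E v \<inter> insert v J = {}"
    and "uncovered V E v (insert v J) = {}"
proof -
  have V: "finite V" and E: "symp E" "irreflp E" using fin_graphD[OF G] by auto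
  then have v_nbhd: "v \<notin> nbhd V E v" by (simp add: nbhd_def irreflp_def)
  have JR: "J \<subseteq> V - insert v (nbhd V E v)" using J by (simp add: indep_sets_def)
  then show "v \<notin> J" by blast
  have "finite J" using JR V by (auto intro: finite_subset)
  then show "card (insert v J) = Suc (card J)" using \<open>v \<notin> J\<close> by simp
  show "nbhd V E v \<inter> insert v J = {}"
    using JR v_nbhd by blast
  have "v \<in> insert v J - nbhd V E v" using v_nbhd by simp
  then show "uncovered V E v (insert v J) = {}"
    by (auto simp: uncovered_def nbhd_def dest: sympD[OF E(1)])
qed

lemma sum_hc_weight_split_at:
  fixes lam :: real
  assumes G: "fin_graph V E" and v: "v \<in> V"
  shows "(\<Sum>I\<in>indep_sets V E. lam ^ card I * X I)
    = (\<Sum>J\<in>indep_sets (V - insert v (nbhd V E v)) E. lam ^ card J *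
         ((\<Sum>K\<in>indep_sets (uncovered V E v J) E. lam ^ card K * X (J \<union> K)) + lam * X (insert v J)))"
  unfolding sum_indep_sets_split_at[OF G v]
proof (rule sum.cong[OF refl])
  fix J assume J: "J \<in> indep_sets (V - insert v (nbhd V E v)) E"
  have "(\<Sum>K\<in>indep_sets (uncovered V E v J) E. lam ^ card (J \<union> K) * X (J \<union> K))
      = lam ^ card J * (\<Sum>K\<in>indep_sets (uncovered V E v J) E. lam ^ card K * X (J \<union> K))"
    unfolding sum_distrib_left
    by (rule sum.cong[OF refl]) (simp add: split_at_union_simps[OF G J] power_add mult.assoc)
  moreover have "lam ^ card (insert v J) * X (insert v J) = lam ^ card J * (lam * X (insert v J))"
    by (simp add: split_at_insert_simps[OF G J] mult_ac)
  ultimately show "(\<Sum>K\<in>indep_sets (uncovered V E v J) E. lam ^ card (J \<union> K) * X (J \<union> K))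
      + lam ^ card (insert v J) * X (insert v J)
    = lam ^ card J * ((\<Sum>K\<in>indep_sets (uncovered V E v J) E. lam ^ card K * X (J \<union> K))
      + lam * X (insert v J))"
    by (simp add: distrib_left)
qed

lemma hc_prob_occupied_ge:
  assumes G: "fin_graph V E" and v: "v \<in> V" and lam: "0 < lam"
  shows "lam / (1 + lam) * hc_expect V E lam (\<lambda>I. (1 + lam) powr - real (card (uncovered V E v I)))
    \<le> hc_prob V E lam (\<lambda>I. v \<in> I)"
proof -
  let ?R = "V - insert v (nbhd V E v)" and ?U = "uncovered V E v"
  let ?A = "\<lambda>I. (1 + lam) powr - real (card (?U I))"
  have V: "finite V" using fin_graphD[OF G] by simp
  have local: "lam / (1 + lam) * (hc_Z (?U J) E lam * ?A J + lam) \<le> lam" for J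
  proof -
    have "hc_Z (?U J) E lam * ?A J \<le> 1"
      using hc_Z_mult_powr_neg_card_le_1[OF finite_uncovered[OF V]] lam by simp
    then have "lam / (1 + lam) * (hc_Z (?U J) E lam * ?A J + lam) \<le> lam / (1 + lam) * (1 + lam)"
      using lam by (intro mult_left_mono) auto
    then show ?thesis using lam by simp
  qed
  have A_sum: "(\<Sum>I\<in>indep_sets V E. lam ^ card I * ?A I)
      = (\<Sum>J\<in>indep_sets ?R E. lam ^ card J * (hc_Z (?U J) E lam * ?A J + lam))"
    unfolding sum_hc_weight_split_at[OF G v]
  proof (rule sum.cong[OF refl])
    fix J assume J: "J \<in> indep_sets ?R E"
    have "(\<Sum>K\<in>indep_sets (?U J) E. lam ^ card K * ?A (J \<union> K)) = hc_Z (?U J) E lam * ?A J"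
      by (simp add: split_at_union_simps[OF G J] hc_Z_def sum_distrib_right)
    then show "lam ^ card J * ((\<Sum>K\<in>indep_sets (?U J) E. lam ^ card K * ?A (J \<union> K)) + lam * ?A (insert v J))
        = lam ^ card J * (hc_Z (?U J) E lam * ?A J + lam)"
      using lam by (simp add: split_at_insert_simps[OF G J])
  qed
  have P_sum: "(\<Sum>I\<in>indep_sets V E. lam ^ card I * (if v \<in> I then 1 else 0))
      = (\<Sum>J\<in>indep_sets ?R E. lam ^ card J * lam)"
    unfolding sum_hc_weight_split_at[OF G v]
  proof (rule sum.cong[OF refl])
    fix J assume J: "J \<in> indep_sets ?R E"
    show "lam ^ card J * ((\<Sum>K\<in>indep_sets (?U J) E. lam ^ card K * (if v \<in> J \<union> K then 1 else 0))
        + lam * (if v \<in> insert v J then 1 else 0)) = lam ^ card J * lam"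
      by (simp add: split_at_union_simps[OF G J] split_at_insert_simps[OF G J])
  qed
  have "lam / (1 + lam) * (lam ^ card J * (hc_Z (?U J) E lam * ?A J + lam)) \<le> lam ^ card J * lam" for J
    using mult_left_mono[OF local, of "lam ^ card J"] lam by (simp add: mult.left_commute)
  then have "lam / (1 + lam) * (\<Sum>I\<in>indep_sets V E. lam ^ card I * ?A I)
      \<le> (\<Sum>I\<in>indep_sets V E. lam ^ card I * (if v \<in> I then 1 else 0))"
    unfolding A_sum P_sum sum_distrib_left by (rule sum_mono)
  then show ?thesis
    unfolding hc_prob_def by (rule hc_expect_scaled_le[OF V less_imp_le[OF lam]])
qed

lemma hc_expect_card_nbhd_ge:
  assumes G: "fin_graph V E" and v: "v \<in> V" and lam: "0 < lam"
    and sparse: "real (induced_edges E (nbhd V E v)) \<le> D"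
  shows "lam / (1 + lam) * hc_expect V E lam (\<lambda>I. real (card (uncovered V E v I))
      * (1 + lam) powr - (2 * D / real (card (uncovered V E v I))))
    \<le> hc_expect V E lam (\<lambda>I. real (card (nbhd V E v \<inter> I)))"
proof -
  let ?R = "V - insert v (nbhd V E v)" and ?U = "uncovered V E v"
  let ?B = "\<lambda>I. real (card (?U I)) * (1 + lam) powr - (2 * D / real (card (?U I)))"
  let ?M = "\<lambda>J. \<Sum>K\<in>indep_sets (?U J) E. lam ^ card K * real (card K)"
  have V: "finite V" and E: "symp E" "irreflp E" using fin_graphD[OF G] by auto
  have local: "lam / (1 + lam) * (hc_Z (?U J) E lam * ?B J) \<le> ?M J" for J
  proof -
    have "finite (nbhd V E v)" using V by (simp add: nbhd_def)
    then have "induced_edges E (?U J) \<le> induced_edges E (nbhd V E v)"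
      by (rule induced_edges_mono[OF _ uncovered_subset_nbhd])
    then have "real (induced_edges E (?U J)) \<le> D"
      using sparse by (meson of_nat_le_iff order_trans)
    then show ?thesis
      using sum_card_indep_sets_ge[OF E finite_uncovered[OF V] lam] by (simp add: mult.assoc)
  qed
  have B_sum: "(\<Sum>I\<in>indep_sets V E. lam ^ card I * ?B I)
      = (\<Sum>J\<in>indep_sets ?R E. lam ^ card J * (hc_Z (?U J) E lam * ?B J))"
    unfolding sum_hc_weight_split_at[OF G v]
  proof (rule sum.cong[OF refl])
    fix J assume J: "J \<in> indep_sets ?R E"
    have "(\<Sum>K\<in>indep_sets (?U J) E. lam ^ card K * ?B (J \<union> K)) = hc_Z (?U J) E lam * ?B J"
      by (simp add: split_at_union_simps[OF G J] hc_Z_def sum_distrib_right)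
    then show "lam ^ card J * ((\<Sum>K\<in>indep_sets (?U J) E. lam ^ card K * ?B (J \<union> K)) + lam * ?B (insert v J))
        = lam ^ card J * (hc_Z (?U J) E lam * ?B J)"
      by (simp add: split_at_insert_simps[OF G J])
  qed
  have N_sum: "(\<Sum>I\<in>indep_sets V E. lam ^ card I * real (card (nbhd V E v \<inter> I)))
      = (\<Sum>J\<in>indep_sets ?R E. lam ^ card J * ?M J)"
    unfolding sum_hc_weight_split_at[OF G v]
  proof (rule sum.cong[OF refl])
    fix J assume J: "J \<in> indep_sets ?R E"
    show "lam ^ card J * ((\<Sum>K\<in>indep_sets (?U J) E. lam ^ card K * real (card (nbhd V E v \<inter> (J \<union> K))))
        + lam * real (card (nbhd V E v \<inter> insert v J))) = lam ^ card J * ?M J"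
      by (simp add: split_at_union_simps[OF G J] split_at_insert_simps[OF G J])
  qed
  have "lam / (1 + lam) * (lam ^ card J * (hc_Z (?U J) E lam * ?B J)) \<le> lam ^ card J * ?M J" for J
    using mult_left_mono[OF local, of "lam ^ card J"] lam by (simp add: mult.left_commute)
  then have "lam / (1 + lam) * (\<Sum>I\<in>indep_sets V E. lam ^ card I * ?B I)
      \<le> (\<Sum>I\<in>indep_sets V E. lam ^ card I * real (card (nbhd V E v \<inter> I)))"
    unfolding B_sum N_sum sum_distrib_left by (rule sum_mono)
  then show ?thesis
    by (rule hc_expect_scaled_le[OF V less_imp_le[OF lam]])
qed

section \<open>The local and the averaged bound\<close>

lemma card_nbhd_le_max_degree:
  assumes "finite V" "v \<in> V"
  shows "card (nbhd V E v) \<le> max_degree V E"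
  unfolding max_degree_def using assms by (intro Max_ge) auto

lemma sum_card_nbhd_Int:
  assumes G: "fin_graph V E" and I: "I \<subseteq> V"
  shows "(\<Sum>v\<in>V. card (nbhd V E v \<inter> I)) = (\<Sum>u\<in>I. card (nbhd V E u))"
proof -
  have V: "finite V" and E: "symp E" using fin_graphD[OF G] by auto
  then have "finite I" using I finite_subset by blast
  have "nbhd V E v \<inter> I = I \<inter> {u. E v u}" for v
    using I by (auto simp: nbhd_def)
  then have "card (nbhd V E v \<inter> I) = (\<Sum>u\<in>I. if E v u then 1 else 0)" for v
    using \<open>finite I\<close> by (simp add: sum.If_cases)
  then have "(\<Sum>v\<in>V. card (nbhd V E v \<inter> I)) = (\<Sum>v\<in>V. \<Sum>u\<in>I. if E v u then 1 else 0)"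
    by simp
  also have "\<dots> = (\<Sum>u\<in>I. \<Sum>v\<in>V. if E v u then 1 else 0)"
    by (rule sum.swap)
  also have "\<dots> = (\<Sum>u\<in>I. card (nbhd V E u))"
  proof (rule sum.cong[OF refl])
    fix u
    have "nbhd V E u = V \<inter> {v. E v u}"
      using E by (auto simp: nbhd_def dest: sympD)
    then show "(\<Sum>v\<in>V. if E v u then 1 else 0) = card (nbhd V E u)"
      using V by (simp add: sum.If_cases)
  qed
  finally show ?thesis .
qed

lemma sum_hc_expect_card_nbhd_le:
  assumes G: "fin_graph V E" and lam: "0 \<le> lam"
    and deg: "\<And>v. v \<in> V \<Longrightarrow> card (nbhd V E v) \<le> \<Delta>"
  shows "(\<Sum>v\<in>V. hc_expect V E lam (\<lambda>I. real (card (nbhd V E v \<inter> I))))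
    \<le> real \<Delta> * hc_expect V E lam (\<lambda>I. real (card I))"
proof -
  have "(\<Sum>v\<in>V. hc_expect V E lam (\<lambda>I. real (card (nbhd V E v \<inter> I))))
      = hc_expect V E lam (\<lambda>I. \<Sum>v\<in>V. real (card (nbhd V E v \<inter> I)))"
    by (rule hc_expect_sum[symmetric])
  also have "\<dots> \<le> hc_expect V E lam (\<lambda>I. real \<Delta> * real (card I))"
  proof (rule hc_expect_mono[OF lam])
    fix I assume "I \<in> indep_sets V E"
    then have I: "I \<subseteq> V" by (simp add: indep_sets_def)
    have "(\<Sum>v\<in>V. card (nbhd V E v \<inter> I)) = (\<Sum>u\<in>I. card (nbhd V E u))"
      by (rule sum_card_nbhd_Int[OF G I])
    also have "\<dots> \<le> (\<Sum>u\<in>I. \<Delta>)"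
      using deg I by (intro sum_mono) auto
    finally have "(\<Sum>v\<in>V. card (nbhd V E v \<inter> I)) \<le> \<Delta> * card I"
      by (simp add: mult.commute)
    then show "(\<Sum>v\<in>V. real (card (nbhd V E v \<inter> I))) \<le> real \<Delta> * real (card I)"
      by (simp flip: of_nat_sum of_nat_mult)
  qed
  also have "\<dots> = real \<Delta> * hc_expect V E lam (\<lambda>I. real (card I))"
    by (rule hc_expect_cmult)
  finally show ?thesis .
qed

lemma hc_expect_card_eq_sum_prob:
  assumes "finite V"
  shows "hc_expect V E lam (\<lambda>I. real (card I)) = (\<Sum>v\<in>V. hc_prob V E lam (\<lambda>I. v \<in> I))"
proof -
  have "hc_expect V E lam (\<lambda>I. real (card I)) = hc_expect V E lam (\<lambda>I. \<Sum>v\<in>V. if v \<in> I then 1 else 0)"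
    using assms by (intro hc_expect_cong) (simp add: sum.If_cases Int_absorb1 indep_sets_def)
  also have "\<dots> = (\<Sum>v\<in>V. hc_expect V E lam (\<lambda>I. if v \<in> I then 1 else 0))"
    by (rule hc_expect_sum)
  finally show ?thesis
    by (simp add: hc_prob_def)
qed

lemma sum_hc_expect_jensen:
  fixes V :: "'a set" and \<phi> :: "real \<Rightarrow> real"
  assumes V: "finite V" and lam: "0 \<le> lam" and A: "finite A" "A \<noteq> {}"
    and \<phi>: "convex_on {0..} \<phi>" and Y: "\<And>a I. a \<in> A \<Longrightarrow> I \<in> indep_sets V E \<Longrightarrow> 0 \<le> Y a I"
  shows "real (card A) * \<phi> ((\<Sum>a\<in>A. hc_expect V E lam (Y a)) / real (card A))
    \<le> (\<Sum>a\<in>A. hc_expect V E lam (\<lambda>I. \<phi> (Y a I)))"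
proof -
  define n where "n = real (card A)"
  have n: "0 < n" using A by (simp add: n_def card_gt_0_iff)
  have nonneg: "0 \<le> hc_expect V E lam (Y a)" if "a \<in> A" for a
    using Y that by (intro hc_expect_nonneg[OF lam])
  have "\<phi> ((\<Sum>a\<in>A. hc_expect V E lam (Y a)) / n) = \<phi> (\<Sum>a\<in>A. (1 / n) *\<^sub>R hc_expect V E lam (Y a))"
    by (simp add: sum_divide_distrib)
  also have "\<dots> \<le> (\<Sum>a\<in>A. (1 / n) * \<phi> (hc_expect V E lam (Y a)))"
    using A \<phi> n nonneg by (intro convex_on_sum) (auto simp: n_def)
  also have "\<dots> \<le> (\<Sum>a\<in>A. (1 / n) * hc_expect V E lam (\<lambda>I. \<phi> (Y a I)))"
    using hc_expect_jensen[OF V lam \<phi>] Y n by (intro sum_mono mult_left_mono) auto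
  also have "\<dots> = (\<Sum>a\<in>A. hc_expect V E lam (\<lambda>I. \<phi> (Y a I))) / n"
    by (simp add: sum_divide_distrib)
  finally show ?thesis
    using n by (simp add: n_def pos_le_divide_eq mult.commute)
qed

lemma hc_occupancy_vertex_bound:
  assumes G: "fin_graph V E" and v: "v \<in> V" and lam: "0 < lam" and \<alpha>: "0 \<le> \<alpha>" and \<beta>: "0 \<le> \<beta>"
    and sparse: "real (induced_edges E (nbhd V E v)) \<le> D"
  shows "lam / (1 + lam) * (INF z\<in>{0..}. \<alpha> * (1 + lam) powr (- z) + \<beta> * z * (1 + lam) powr (- (2 * D / z)))
    \<le> \<alpha> * hc_prob V E lam (\<lambda>I. v \<in> I) + \<beta> * hc_expect V E lam (\<lambda>I. real (card (nbhd V E v \<inter> I)))"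
proof -
  define g where "g z = \<alpha> * (1 + lam) powr (- z) + \<beta> * z * (1 + lam) powr (- (2 * D / z))" for z
  define Y where "Y I = real (card (uncovered V E v I))" for I
  have V: "finite V" using fin_graphD[OF G] by simp
  have "bdd_below (g ` {0..})"
    using \<alpha> \<beta> by (intro bdd_belowI[of _ 0]) (auto simp: g_def)
  then have inf_le: "(INF z\<in>{0..}. g z) \<le> g (Y I)" for I
    by (rule cINF_lower) (simp add: Y_def)
  have E_g: "hc_expect V E lam (\<lambda>I. g (Y I))
      = \<alpha> * hc_expect V E lam (\<lambda>I. (1 + lam) powr (- Y I))
        + \<beta> * hc_expect V E lam (\<lambda>I. Y I * (1 + lam) powr (- (2 * D / Y I)))"
    by (simp add: g_def hc_expect_add hc_expect_cmult mult.assoc)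
  have "lam / (1 + lam) * (INF z\<in>{0..}. g z) = lam / (1 + lam) * hc_expect V E lam (\<lambda>_. INF z\<in>{0..}. g z)"
    using lam by (simp add: hc_expect_const[OF V])
  also have "\<dots> \<le> lam / (1 + lam) * hc_expect V E lam (\<lambda>I. g (Y I))"
    using inf_le lam by (intro mult_left_mono hc_expect_mono) auto
  also have "\<dots> = \<alpha> * (lam / (1 + lam) * hc_expect V E lam (\<lambda>I. (1 + lam) powr (- Y I)))
      + \<beta> * (lam / (1 + lam) * hc_expect V E lam (\<lambda>I. Y I * (1 + lam) powr (- (2 * D / Y I))))"
    unfolding E_g by (simp add: algebra_simps)
  also have "\<dots> \<le> \<alpha> * hc_prob V E lam (\<lambda>I. v \<in> I) + \<beta> * hc_expect V E lam (\<lambda>I. real (card (nbhd V E v \<inter> I)))"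
    using hc_prob_occupied_ge[OF G v lam] hc_expect_card_nbhd_ge[OF G v lam sparse] \<alpha> \<beta>
    by (intro add_mono mult_left_mono) (simp_all add: Y_def)
  finally show ?thesis
    by (simp add: g_def)
qed

definition mean_uncovered :: "'a set \<Rightarrow> ('a \<Rightarrow> 'a \<Rightarrow> bool) \<Rightarrow> real \<Rightarrow> real" where
  "mean_uncovered V E lam =
    (\<Sum>v\<in>V. hc_expect V E lam (\<lambda>I. real (card (uncovered V E v I)))) / real (card V)"

lemma mean_uncovered_nonneg: "0 \<le> lam \<Longrightarrow> 0 \<le> mean_uncovered V E lam"
  unfolding mean_uncovered_def by (intro divide_nonneg_nonneg sum_nonneg hc_expect_nonneg) auto

lemma hc_expect_card_ge_mean_uncovered:
  assumes G: "fin_graph V E" and nonempty: "V \<noteq> {}" and lam: "0 < lam"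
  shows "lam / (1 + lam) * (1 + lam) powr (- mean_uncovered V E lam)
    \<le> hc_expect V E lam (\<lambda>I. real (card I)) / real (card V)"
proof -
  let ?c = "lam / (1 + lam)" and ?A = "\<lambda>z. (1 + lam) powr (- z)"
  let ?Y = "\<lambda>v I. real (card (uncovered V E v I))"
  have V: "finite V" using fin_graphD[OF G] by simp
  have n: "0 < real (card V)" using V nonempty by (simp add: card_gt_0_iff)
  have "convex_on UNIV ?A"
    using convex_on_powr_linear[of "1 + lam" "- 1"] lam by simp
  then have "convex_on {0..} ?A"
    by (rule convex_on_subset) auto
  from sum_hc_expect_jensen[OF V less_imp_le[OF lam] V nonempty this, where Y = ?Y]
  have jensen: "real (card V) * ?A (mean_uncovered V E lam) \<le> (\<Sum>v\<in>V. hc_expect V E lam (\<lambda>I. ?A (?Y v I)))"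
    by (simp add: mean_uncovered_def)
  have "?c * (real (card V) * ?A (mean_uncovered V E lam))
      \<le> (\<Sum>v\<in>V. ?c * hc_expect V E lam (\<lambda>I. ?A (?Y v I)))"
    using mult_left_mono[OF jensen, of ?c] lam by (simp add: sum_distrib_left)
  also have "\<dots> \<le> (\<Sum>v\<in>V. hc_prob V E lam (\<lambda>I. v \<in> I))"
    using hc_prob_occupied_ge[OF G _ lam] by (intro sum_mono) simp
  also have "\<dots> = hc_expect V E lam (\<lambda>I. real (card I))"
    by (rule hc_expect_card_eq_sum_prob[OF V, symmetric])
  finally show ?thesis
    using n by (simp add: pos_le_divide_eq mult_ac)
qed

lemma hc_expect_card_ge_mean_uncovered_sparse:
  assumes G: "fin_graph V E" and nonempty: "V \<noteq> {}" and lam: "0 < lam"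
    and deg: "\<And>v. v \<in> V \<Longrightarrow> card (nbhd V E v) \<le> \<Delta>"
    and sparse: "\<And>v. v \<in> V \<Longrightarrow> real (induced_edges E (nbhd V E v)) \<le> D"
  shows "lam / (1 + lam) * (mean_uncovered V E lam * (1 + lam) powr (- (2 * D / mean_uncovered V E lam)))
    \<le> real \<Delta> * (hc_expect V E lam (\<lambda>I. real (card I)) / real (card V))"
proof -
  let ?c = "lam / (1 + lam)" and ?B = "\<lambda>z. z * (1 + lam) powr (- (2 * D / z))"
  let ?Y = "\<lambda>v I. real (card (uncovered V E v I))"
  have V: "finite V" using fin_graphD[OF G] by simp
  have n: "0 < real (card V)" using V nonempty by (simp add: card_gt_0_iff)
  from nonempty obtain v where "v \<in> V" by blast
  then have "0 \<le> D" using sparse[of v] by linarith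
  then have "convex_on {0..} ?B"
    using convex_on_mult_powr_neg_div[of "1 + lam" "2 * D"] lam by simp
  from sum_hc_expect_jensen[OF V less_imp_le[OF lam] V nonempty this, where Y = ?Y]
  have jensen: "real (card V) * ?B (mean_uncovered V E lam) \<le> (\<Sum>v\<in>V. hc_expect V E lam (\<lambda>I. ?B (?Y v I)))"
    by (simp add: mean_uncovered_def)
  have "?c * (real (card V) * ?B (mean_uncovered V E lam))
      \<le> (\<Sum>v\<in>V. ?c * hc_expect V E lam (\<lambda>I. ?B (?Y v I)))"
    using mult_left_mono[OF jensen, of ?c] lam by (simp add: sum_distrib_left)
  also have "\<dots> \<le> (\<Sum>v\<in>V. hc_expect V E lam (\<lambda>I. real (card (nbhd V E v \<inter> I))))"
    using hc_expect_card_nbhd_ge[OF G _ lam sparse] by (intro sum_mono) simp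
  also have "\<dots> \<le> real \<Delta> * hc_expect V E lam (\<lambda>I. real (card I))"
    by (rule sum_hc_expect_card_nbhd_le[OF G less_imp_le[OF lam] deg])
  finally show ?thesis
    using n by (simp add: pos_le_divide_eq mult_ac)
qed

lemma INF_max_powr_le:
  fixes c q C \<Delta> T y :: real
  assumes c: "0 < c" and q: "1 \<le> q" and C: "0 \<le> C" and \<Delta>: "1 \<le> \<Delta>" and y: "0 \<le> y"
    and A_le: "c * q powr (- y) \<le> T" and B_le: "c * (y * q powr (- (C / y))) \<le> \<Delta> * T"
  shows "(INF z\<in>{0<..}. max (c * q powr (- z)) (c * (z / \<Delta>) * q powr (- (C / z)))) \<le> T"
proof -
  define h where "h z = max (c * q powr (- z)) (c * (z / \<Delta>) * q powr (- (C / z)))" for z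
  have "\<exists>z>0. h z \<le> T"
  proof (cases "y = 0")
    case True
    have "c \<le> T" using A_le True q by simp
    have A_1: "q powr (- 1) \<le> 1"
      using powr_mono[of "- 1" 0 q] q by simp
    have le_1: "1 / \<Delta> * q powr (- C) \<le> 1"
      using powr_mono[of "- C" 0 q] \<Delta> q C by (intro mult_le_one) auto
    have "h 1 \<le> c"
      using mult_left_le[OF A_1 less_imp_le[OF c]] mult_left_le[OF le_1 less_imp_le[OF c]]
      by (simp add: h_def mult.assoc)
    then show ?thesis using \<open>c \<le> T\<close> by (intro exI[of _ 1]) simp
  next
    case False
    then have "0 < y" using y by simp
    have "c * (y / \<Delta>) * q powr (- (C / y)) = c * (y * q powr (- (C / y))) / \<Delta>"
      by simp
    also have "\<dots> \<le> T"
      using B_le \<Delta> by (simp add: pos_divide_le_eq mult.commute)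
    finally have "h y \<le> T"
      using A_le by (simp add: h_def)
    then show ?thesis using \<open>0 < y\<close> by blast
  qed
  then obtain z where "0 < z" "h z \<le> T" by blast
  moreover have "bdd_below (h ` {0<..})"
    using c by (intro bdd_belowI[of _ 0]) (auto simp: h_def le_max_iff_disj)
  ultimately have "(INF z\<in>{0<..}. h z) \<le> T"
    by (meson cINF_lower greaterThan_iff order_trans)
  then show ?thesis
    by (simp add: h_def)
qed

lemma hc_occupancy_average_bound:
  assumes G: "fin_graph V E" and nonempty: "V \<noteq> {}" and lam: "0 < lam" and \<Delta>: "1 \<le> \<Delta>"
    and deg: "\<And>v. v \<in> V \<Longrightarrow> card (nbhd V E v) \<le> \<Delta>"
    and sparse: "\<And>v. v \<in> V \<Longrightarrow> real (induced_edges E (nbhd V E v)) \<le> D"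
  shows "(INF z\<in>{0<..}. max (lam / (1 + lam) * (1 + lam) powr (- z))
      (lam / (1 + lam) * (z / real \<Delta>) * (1 + lam) powr (- (2 * D / z))))
    \<le> hc_expect V E lam (\<lambda>I. real (card I)) / real (card V)"
proof -
  from nonempty obtain v where "v \<in> V" by blast
  then have "0 \<le> D" using sparse[of v] by linarith
  show ?thesis
    by (rule INF_max_powr_le[OF _ _ _ _ _ hc_expect_card_ge_mean_uncovered[OF G nonempty lam]
          hc_expect_card_ge_mean_uncovered_sparse[OF G nonempty lam deg sparse]])
      (use lam \<Delta> \<open>0 \<le> D\<close> in \<open>auto intro: mean_uncovered_nonneg\<close>)
qed

theorem lemma3p2:
  fixes V :: "'a set" and E :: "'a \<Rightarrow> 'a \<Rightarrow> bool"
    and f lam \<alpha> \<beta> :: real and \<Delta> :: nat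
  assumes G: "fin_graph V E" and nonempty: "V \<noteq> {}"
    and pos: "f > 0" "lam > 0" "\<alpha> > 0" "\<beta> > 0"
    and Delta: "\<Delta> = max_degree V E" "\<Delta> \<ge> 1"
    and sparse: "\<forall>v\<in>V. real (induced_edges E (nbhd V E v)) \<le> real \<Delta> ^ 2 / f"
  shows "(\<forall>v\<in>V.
            \<alpha> * hc_prob V E lam (\<lambda>I. v \<in> I)
            + \<beta> * hc_expect V E lam (\<lambda>I. real (card (nbhd V E v \<inter> I)))
          \<ge> lam / (1 + lam) *
            (INF z\<in>{0::real..}. \<alpha> * (1 + lam) powr (- z)
               + \<beta> * z * (1 + lam) powr (- (2 * real \<Delta> ^ 2 / (f * z)))))
       \<and> hc_expect V E lam (\<lambda>I. real (card I)) / real (card V)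
          \<ge> (INF z\<in>{0::real<..}. max (lam / (1 + lam) * (1 + lam) powr (- z))
               (lam / (1 + lam) * (z / real \<Delta>) * (1 + lam) powr (- (2 * real \<Delta> ^ 2 / (f * z)))))"
proof -
  have deg: "card (nbhd V E v) \<le> \<Delta>" if "v \<in> V" for v
    using card_nbhd_le_max_degree[OF fin_graphD(1)[OF G] that] Delta(1) by simp
  have sparse_v: "real (induced_edges E (nbhd V E v)) \<le> real \<Delta> ^ 2 / f" if "v \<in> V" for v
    using sparse that by blast
  have scale: "2 * (real \<Delta> ^ 2 / f) / z = 2 * real \<Delta> ^ 2 / (f * z)" for z
    by simp
  show ?thesis
    using hc_occupancy_vertex_bound[OF G _ pos(2) less_imp_le[OF pos(3)] less_imp_le[OF pos(4)] sparse_v, unfolded scale]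
      hc_occupancy_average_bound[OF G nonempty pos(2) Delta(2) deg sparse_v, unfolded scale]
    by blast
qed

end
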